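(* Let $f$ be a monotone and subadditive set function on the subsets of $\mathcal{I}$ with nonnegative real values. Then $p(\mathbf{Q},E)=f(\overline{\mathcal{S}}_{\mathbf{Q}}(E))$ (for $\mathbf{Q}\in B(\mathcal{L})$, $E\in\{\mathbf{Q}(D):D\in\mathcal{I}\}$) is an answer-dependent pricing function that is arbitrage-free.
   Context: $\mathcal{I}$ is a countable nonempty set of database instances; queries are deterministic functions on $\mathcal{I}$; a query bundle is a finite tuple of queries from a language $\mathcal{L}$, evaluated componentwise; $B(\mathcal{L})$ is the set of bundles, closed under concatenation $\mathbf{Q}_1,\mathbf{Q}_2$. $f$ monotone: $A\subseteq B\Rightarrow f(A)\le f(B)$; subadditive: $f(A\cup B)\le f(A)+f(B)$. Conflict set: $\overline{\mathcal{S}}_{\mathbf{Q}}(E)=\{D'\in\mathcal{I}:\mathbf{Q}(D')\ne E\}$. $D\vdash\mathbf{Q}_2\twoheadrightarrow\mathbf{Q}_1$ means every $D'\in\mathcal{I}$ with $\mathbf{Q}_2(D')=\mathbf{Q}_2(D)$ satisfies $\mathbf{Q}_1(D')=\mathbf{Q}_1(D)$. An answer-dependent pricing function $p$ is arbitrage-free if (i) (no information arbitrage) for all $D\in\mathcal{I}$ and $\mathbf{Q}_1,\mathbf{Q}_2\in B(\mathcal{L})$, $D\vdash\mathbf{Q}_2\twoheadrightarrow\mathbf{Q}_1$ implies $p(\mathbf{Q}_2,\mathbf{Q}_2(D))\ge p(\mathbf{Q}_1,\mathbf{Q}_1(D))$, and (ii) (no bundle arbitrage) for all $D$ and $\mathbf{Q}_1,\mathbf{Q}_2$,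 $p(\mathbf{Q},\mathbf{Q}(D))\le p(\mathbf{Q}_1,\mathbf{Q}_1(D))+p(\mathbf{Q}_2,\mathbf{Q}_2(D))$ where $\mathbf{Q}=\mathbf{Q}_1,\mathbf{Q}_2$. *)

theory Defs
  imports Complex_Main "HOL-Library.Countable_Set"
begin

text \<open>A query is a function 'i \<Rightarrow> 'o; a query bundle is a finite tuple (list) of
queries; it is evaluated componentwise.  Concatenation of bundles is list append.\<close>

definition eval_bundle :: "('i \<Rightarrow> 'o) list \<Rightarrow> 'i \<Rightarrow> 'o list" where
  "eval_bundle Q D = map (\<lambda>q. q D) Q"

definition bundles :: "('i \<Rightarrow> 'o) set \<Rightarrow> ('i \<Rightarrow> 'o) list set" where
  "bundles L = {Q. Q \<noteq> [] \<and> set Q \<subseteq> L}"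

definition conflict_set :: "'i set \<Rightarrow> ('i \<Rightarrow> 'o) list \<Rightarrow> 'o list \<Rightarrow> 'i set" where
  "conflict_set I Q E = {D' \<in> I. eval_bundle Q D' \<noteq> E}"

definition determines :: "'i set \<Rightarrow> 'i \<Rightarrow> ('i \<Rightarrow> 'o) list \<Rightarrow> ('i \<Rightarrow> 'o) list \<Rightarrow> bool" where
  "determines I D Q2 Q1 \<longleftrightarrow>
     (\<forall>D'\<in>I. eval_bundle Q2 D' = eval_bundle Q2 D \<longrightarrow> eval_bundle Q1 D' = eval_bundle Q1 D)"

definition monotone_setfun :: "'i set \<Rightarrow> ('i set \<Rightarrow> real) \<Rightarrow> bool" where
  "monotone_setfun I f \<longleftrightarrow> (\<forall>A B. A \<subseteq> B \<and> B \<subseteq> I \<longrightarrow> f A \<le> f B)"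

definition subadditive_setfun :: "'i set \<Rightarrow> ('i set \<Rightarrow> real) \<Rightarrow> bool" where
  "subadditive_setfun I f \<longleftrightarrow> (\<forall>A B. A \<subseteq> I \<and> B \<subseteq> I \<longrightarrow> f (A \<union> B) \<le> f A + f B)"

definition answer_dependent_pricing ::
  "'i set \<Rightarrow> ('i \<Rightarrow> 'o) set \<Rightarrow> (('i \<Rightarrow> 'o) list \<Rightarrow> 'o list \<Rightarrow> real) \<Rightarrow> bool" where
  "answer_dependent_pricing I L p \<longleftrightarrow>
     (\<forall>Q\<in>bundles L. \<forall>D\<in>I. p Q (eval_bundle Q D) \<ge> 0)"

definition arbitrage_free ::
  "'i set \<Rightarrow> ('i \<Rightarrow> 'o) set \<Rightarrow> (('i \<Rightarrow> 'o) list \<Rightarrow> 'o list \<Rightarrow> real) \<Rightarrow> bool" where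
  "arbitrage_free I L p \<longleftrightarrow>
     (\<forall>D\<in>I. \<forall>Q1\<in>bundles L. \<forall>Q2\<in>bundles L.
        determines I D Q2 Q1 \<longrightarrow> p Q2 (eval_bundle Q2 D) \<ge> p Q1 (eval_bundle Q1 D)) \<and>
     (\<forall>D\<in>I. \<forall>Q1\<in>bundles L. \<forall>Q2\<in>bundles L.
        p (Q1 @ Q2) (eval_bundle (Q1 @ Q2) D) \<le> p Q1 (eval_bundle Q1 D) + p Q2 (eval_bundle Q2 D))"

end

theory Submission
  imports Defs
begin

text \<open>Information arbitrage: if Q2(D) determines Q1(D), every instance that conflicts with
the answer to Q1 also conflicts with the answer to Q2, so monotonicity of f prices Q2 higher.
Bundle arbitrage: an instance conflicting with the answer to Q1,Q2 conflicts with the answer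
to Q1 or to Q2, so monotonicity followed by subadditivity bounds the price of the bundle.\<close>

lemma monotone_setfunD:
  "monotone_setfun I f \<Longrightarrow> A \<subseteq> B \<Longrightarrow> B \<subseteq> I \<Longrightarrow> f A \<le> f B"
  unfolding monotone_setfun_def by blast

lemma subadditive_setfunD:
  "subadditive_setfun I f \<Longrightarrow> A \<subseteq> I \<Longrightarrow> B \<subseteq> I \<Longrightarrow> f (A \<union> B) \<le> f A + f B"
  unfolding subadditive_setfun_def by blast

lemma conflict_set_subset: "conflict_set I Q E \<subseteq> I"
  unfolding conflict_set_def by blast

lemma eval_bundle_append: "eval_bundle (Q1 @ Q2) D = eval_bundle Q1 D @ eval_bundle Q2 D"
  unfolding eval_bundle_def by simp

lemma conflict_set_mono_determines:
  assumes "D \<in> I" and "determines I D Q2 Q1"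
  shows "conflict_set I Q1 (eval_bundle Q1 D) \<subseteq> conflict_set I Q2 (eval_bundle Q2 D)"
  using assms unfolding conflict_set_def determines_def by blast

lemma conflict_set_append_subset:
  "conflict_set I (Q1 @ Q2) (eval_bundle (Q1 @ Q2) D)
     \<subseteq> conflict_set I Q1 (eval_bundle Q1 D) \<union> conflict_set I Q2 (eval_bundle Q2 D)"
  unfolding conflict_set_def eval_bundle_append by auto

lemma conflict_price_determines:
  assumes "monotone_setfun I f" and "D \<in> I" and "determines I D Q2 Q1"
  shows "f (conflict_set I Q1 (eval_bundle Q1 D)) \<le> f (conflict_set I Q2 (eval_bundle Q2 D))"
  by (rule monotone_setfunD[OF assms(1) conflict_set_mono_determines[OF assms(2,3)]
        conflict_set_subset])

lemma conflict_price_append: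
  fixes f :: "'i set \<Rightarrow> real"
  assumes mono: "monotone_setfun I f" and subadd: "subadditive_setfun I f"
  shows "f (conflict_set I (Q1 @ Q2) (eval_bundle (Q1 @ Q2) D))
     \<le> f (conflict_set I Q1 (eval_bundle Q1 D)) + f (conflict_set I Q2 (eval_bundle Q2 D))"
proof -
  let ?C1 = "conflict_set I Q1 (eval_bundle Q1 D)" and ?C2 = "conflict_set I Q2 (eval_bundle Q2 D)"
  have "f (conflict_set I (Q1 @ Q2) (eval_bundle (Q1 @ Q2) D)) \<le> f (?C1 \<union> ?C2)"
    by (rule monotone_setfunD[OF mono conflict_set_append_subset
          Un_least[OF conflict_set_subset conflict_set_subset]])
  also have "\<dots> \<le> f ?C1 + f ?C2"
    by (rule subadditive_setfunD[OF subadd conflict_set_subset conflict_set_subset])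
  finally show ?thesis .
qed

theorem corollary1:
  fixes I :: "'i set" and L :: "('i \<Rightarrow> 'o) set" and f :: "'i set \<Rightarrow> real"
  assumes "countable I" and "I \<noteq> {}"
    and "monotone_setfun I f" and "subadditive_setfun I f"
    and "\<And>A. A \<subseteq> I \<Longrightarrow> f A \<ge> 0"
  shows "answer_dependent_pricing I L (\<lambda>Q E. f (conflict_set I Q E))
       \<and> arbitrage_free I L (\<lambda>Q E. f (conflict_set I Q E))"
proof
  show "answer_dependent_pricing I L (\<lambda>Q E. f (conflict_set I Q E))"
    unfolding answer_dependent_pricing_def using assms(5)[OF conflict_set_subset] by blast
  show "arbitrage_free I L (\<lambda>Q E. f (conflict_set I Q E))"
    unfolding arbitrage_free_def
    by (simp add: conflict_price_determines[OF assms(3)] conflict_price_append[OF assms(3,4)])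
qed

end
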